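(* (a) Let $n\geq 3$ and let $H_1\neq H_2$ be $1$-dimensional linear subspaces of $\mathbb{R}^n$. Then: $H_1^\perp+H_2^\perp=\mathbb{R}^n$ and $\{H_1^\perp,H_2^\perp\}$ cannot be partitioned into two nonempty mutually orthogonal subsets; if $E\subset S^{n-1}$ is nonempty, closed, and $S^{n-1}\cap(H_j^\perp+x)\subset E$ for $j=1,2$ and all $x\in E$, then $E=S^{n-1}$; every closed $F\subset\mathbb{R}^n$ invariant under all rotations fixing $H_1$ and all rotations fixing $H_2$ is a union of spheres centered at the origin; and every convex body rotationally symmetric with respect to both $H_1$ and $H_2$ is a ball centered at the origin. (b) Let $n\ge 4$. For every $k\in\mathbb{N}$ there exist pairwise different linear subspaces $H_1,\dots,H_k$ of $\mathbb{R}^n$ with $2\le\dim H_j\le n-2$ and a convex body $K$ in $\mathbb{R}^n$ that is rotationally symmetric with respect to each $H_j$ but is not a ball centered at the origin (so that none of the conclusions in (a), with $H_1,H_2$ replaced by $H_1,\dots,H_k$, hold for them).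
   Context: $H^\perp$ is the orthogonal complement; $S^{n-1}$ the unit sphere. A rotation fixing $H$ is an element of $SO(n)$ acting as the identity on $H$. A set $X$ is rotationally symmetric with respect to an $i$-dimensional subspace $H$ if for every $x\in H$, $X\cap(H^\perp+x)$ is a union of $(n-i-1)$-dimensional spheres centered at $x$. A convex body is a compact convex set with nonempty interior. *)

theory Defs
  imports "HOL-Analysis.Analysis"
begin

definition rotation_fixing :: "(real^'n) set \<Rightarrow> real^'n^'n \<Rightarrow> bool" where
  "rotation_fixing H Q \<longleftrightarrow> rotation_matrix Q \<and> (\<forall>x\<in>H. Q *v x = x)"

definition setsum :: "(real^'n) set \<Rightarrow> (real^'n) set \<Rightarrow> (real^'n) set" where
  "setsum A B = {a + b | a b. a \<in> A \<and> b \<in> B}"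

definition orth_decomposable :: "(real^'n) set set \<Rightarrow> bool" where
  "orth_decomposable F \<longleftrightarrow> (\<exists>A B. A \<union> B = F \<and> A \<inter> B = {} \<and> A \<noteq> {} \<and> B \<noteq> {} \<and>
      (\<forall>U\<in>A. \<forall>V\<in>B. \<forall>u\<in>U. \<forall>v\<in>V. orthogonal u v))"

text \<open>Union of spheres centered at c (radius 0 allowed: the degenerate sphere {c}).\<close>
definition union_of_spheres_at :: "real^'n \<Rightarrow> (real^'n) set \<Rightarrow> bool" where
  "union_of_spheres_at c X \<longleftrightarrow> (\<exists>R \<subseteq> {0..}. X = (\<Union>r\<in>R. sphere c r))"

text \<open>Rotational symmetry with respect to a subspace H (of dimension i): for every x in H,
  the section of X by the affine subspace H^perp + x is a union of (n-i-1)-dimensional spheres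
  centered at x, i.e. of sets (sphere x r) intersected with (H^perp + x), r \<ge> 0.\<close>
definition rot_symmetric :: "(real^'n) set \<Rightarrow> (real^'n) set \<Rightarrow> bool" where
  "rot_symmetric X H \<longleftrightarrow> (\<forall>x\<in>H. \<exists>R \<subseteq> {0..}.
      X \<inter> ((+) x ` orthogonal_comp H) = (\<Union>r\<in>R. sphere x r \<inter> ((+) x ` orthogonal_comp H)))"

definition convex_body :: "(real^'n) set \<Rightarrow> bool" where
  "convex_body K \<longleftrightarrow> compact K \<and> convex K \<and> interior K \<noteq> {}"

definition ball_at_origin :: "(real^'n) set \<Rightarrow> bool" where
  "ball_at_origin K \<longleftrightarrow> (\<exists>r>0. K = cball 0 r)"

end

theory Submission
  imports Defs
begin

text \<open>Write \<open>H\<^sub>j = span {h\<^sub>j}\<close> with unit vectors \<open>h\<^sub>j\<close>; then \<open>H\<^sub>1 \<noteq> H\<^sub>2\<close> means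
  \<open>\<bar>c\<bar> < 1\<close> for \<open>c = h\<^sub>1 \<bullet> h\<^sub>2\<close>. Each hypothesis in (a) makes the set \<open>X\<close> in question axially
  symmetric about both \<open>h\<^sub>j\<close>: with \<open>y\<close> it contains every \<open>z\<close> of the same norm and the same height
  \<open>z \<bullet> h\<^sub>j = y \<bullet> h\<^sub>j\<close> (for rotation invariance because in dimension at least 3 such a move is a
  product of two reflections fixing \<open>h\<^sub>j\<close>). Two such symmetries make a closed set radially
  symmetric. On the sphere of radius \<open>r\<close>, let \<open>A\<close> be the closed set of \<open>h\<^sub>1\<close>-heights of points
  of \<open>X\<close>. Moving inside the \<open>h\<^sub>1\<close>-slice and then inside an \<open>h\<^sub>2\<close>-slice carries height \<open>a\<close> to
  every height within \<open>sqrt (1 - c\<^sup>2) * sqrt (r\<^sup>2 - c\<^sup>2 * a\<^sup>2)\<close> of \<open>c\<^sup>2 * a\<close>; this interval has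
  \<open>a\<close> in its interior when \<open>\<bar>a\<bar> < r\<close>, so \<open>A \<inter> {-r<..<r}\<close> is open and closed in
  \<open>{-r<..<r}\<close>, whence \<open>A = {-r..r}\<close>.

  For (b), a solid cylinder around the coordinate axis \<open>e\<^sub>a\<close> is rotationally symmetric with respect
  to every subspace containing \<open>e\<^sub>a\<close>, and the planes spanned by \<open>e\<^sub>a\<close> and \<open>e\<^sub>b + j e\<^sub>c\<close>
  (\<open>j \<in> \<nat>\<close>) are pairwise different.\<close>

section \<open>Rotations fixing a vector\<close>

definition reflect_along :: "'a::real_inner \<Rightarrow> 'a \<Rightarrow> 'a" where
  "reflect_along u x = x - (2 * (u \<bullet> x)) *\<^sub>R u"

lemma linear_reflect_along: "linear (reflect_along u)"
  by (rule linearI) (auto simp: reflect_along_def inner_add_right algebra_simps)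

lemma inner_reflect_along_commute: "reflect_along u x \<bullet> y = x \<bullet> reflect_along u y"
  by (simp add: reflect_along_def inner_diff_left inner_diff_right inner_commute algebra_simps)

lemma reflect_along_reflect_along [simp]:
  assumes "norm u = 1"
  shows "reflect_along u (reflect_along u x) = x"
proof -
  have "u \<bullet> u = 1"
    using assms by (simp add: norm_eq_square)
  then show ?thesis
    by (simp add: reflect_along_def inner_diff_right algebra_simps)
qed

lemma orthogonal_transformation_reflect_along:
  "norm u = 1 \<Longrightarrow> orthogonal_transformation (reflect_along u)"
  by (simp add: orthogonal_transformation_def linear_reflect_along inner_reflect_along_commute)

lemma reflect_along_swap:
  assumes "norm y = norm z" "y \<noteq> z"
  shows "reflect_along (sgn (y - z)) y = z"
proof -
  define d where "d = y - z"
  have "z \<bullet> z = y \<bullet> y"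
    using assms(1) by (metis power2_norm_eq_inner)
  then have "norm d * norm d = 2 * (d \<bullet> y)"
    by (simp add: d_def power2_norm_eq_inner inner_diff_left inner_diff_right inner_commute
        flip: power2_eq_square)
  moreover from this have "d \<bullet> y \<noteq> 0"
    using assms(2) by (auto simp: d_def)
  ultimately have "(2 * (sgn d \<bullet> y)) *\<^sub>R sgn d = d"
    by (simp add: sgn_div_norm field_simps)
  then show ?thesis
    by (simp add: reflect_along_def d_def)
qed

lemma reflect_along_conjugate:
  assumes "norm p = 1"
  shows "reflect_along p (reflect_along v (reflect_along p x)) = reflect_along (reflect_along p v) x"
proof -
  have "reflect_along p (reflect_along v (reflect_along p x))
      = reflect_along p (reflect_along p x) - (2 * (v \<bullet> reflect_along p x)) *\<^sub>R reflect_along p v"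
    by (simp only: reflect_along_def[of v] linear_diff[OF linear_reflect_along]
        linear_cmul[OF linear_reflect_along])
  then show ?thesis
    using assms by (simp add: reflect_along_def[of "reflect_along p v"] inner_reflect_along_commute)
qed

text \<open>Any two reflections are conjugate (by the reflection swapping their normals), so they have the
  same determinant \<open>\<plusminus>1\<close> and the product of two of them has determinant 1.\<close>

lemma rotation_matrix_reflect_along_pair:
  fixes v w :: "real^'n"
  assumes v: "norm v = 1" and w: "norm w = 1"
  shows "rotation_matrix (matrix (reflect_along w) ** matrix (reflect_along v))"
proof -
  let ?M = "\<lambda>u::real^'n. matrix (reflect_along u)"
  have orth: "orthogonal_matrix (?M u)" if "norm u = 1" for u
    using orthogonal_transformation_reflect_along[OF that] orthogonal_transformation_matrix by blast
  have det_sq: "(det (?M u))\<^sup>2 = 1" if "norm u = 1" for u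
    using det_orthogonal_matrix[OF orth[OF that]] by auto
  have "det (?M w) = det (?M v)"
  proof (cases "v = w")
    case False
    define p where "p = sgn (v - w)"
    have p: "norm p = 1"
      using False by (simp add: p_def norm_sgn)
    have "reflect_along p v = w"
      unfolding p_def using v w False by (intro reflect_along_swap) simp_all
    then have "reflect_along w = reflect_along p \<circ> reflect_along v \<circ> reflect_along p"
      using reflect_along_conjugate[OF p] by auto
    then have "?M w = ?M p ** ?M v ** ?M p"
      by (simp add: matrix_compose linear_reflect_along linear_compose)
    then show ?thesis
      using det_sq[OF p] by (simp add: det_mul power2_eq_square)
  qed simp
  then show ?thesis
    using orth v w det_sq[OF v] by (simp add: rotation_matrix_def orthogonal_matrix_mul det_mul power2_eq_square)
qed

lemma unit_orthogonal_to_two_exists: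
  fixes a b :: "'a::euclidean_space"
  assumes "DIM('a) \<ge> 3"
  obtains e where "norm e = 1" "a \<bullet> e = 0" "b \<bullet> e = 0"
proof -
  have "dim {a, b} \<le> card {a, b}"
    by (rule dim_le_card) (auto intro: span_base)
  also have "\<dots> < DIM('a)"
    using assms by (simp add: card_insert_if)
  finally obtain x where x: "x \<noteq> 0" "\<And>y. y \<in> span {a, b} \<Longrightarrow> orthogonal x y"
    using orthogonal_to_subspace_exists by blast
  then have "a \<bullet> x = 0" "b \<bullet> x = 0"
    by (auto simp: orthogonal_def inner_commute span_base)
  then show ?thesis
    using that[of "sgn x"] x(1) by (simp add: norm_sgn sgn_div_norm)
qed

lemma rotation_fixing_vector_exists:
  fixes h y z :: "real^'n"
  assumes "CARD('n) \<ge> 3" "norm y = norm z" "y \<bullet> h = z \<bullet> h"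
  obtains Q where "rotation_matrix Q" "Q *v h = h" "Q *v y = z"
proof (cases "y = z")
  case True
  then show ?thesis
    using that[of "mat 1"] by (simp add: rotation_matrix_def orthogonal_matrix_id)
next
  case False
  define v where "v = sgn (y - z)"
  have v: "norm v = 1"
    using False by (simp add: v_def norm_sgn)
  obtain w where w: "norm w = 1" "h \<bullet> w = 0" "z \<bullet> w = 0"
    using unit_orthogonal_to_two_exists[of h z] assms(1) by auto
  define Q where "Q = matrix (reflect_along w) ** matrix (reflect_along v)"
  have Q: "Q *v x = reflect_along w (reflect_along v x)" for x
    by (simp add: Q_def flip: matrix_vector_mul_assoc) (simp add: matrix_works linear_reflect_along)
  have "reflect_along v h = h" "reflect_along v y = z"
    using assms(3) reflect_along_swap[OF assms(2) False]
    by (simp_all add: v_def reflect_along_def sgn_div_norm inner_diff_left)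
  moreover have "reflect_along w h = h" "reflect_along w z = z"
    using w by (simp_all add: reflect_along_def inner_commute)
  ultimately show ?thesis
    using that[of Q] rotation_matrix_reflect_along_pair[OF v w(1)] Q by (simp add: Q_def)
qed

section \<open>Axial symmetry about two axes\<close>

definition axially_symmetric :: "'a::real_inner \<Rightarrow> 'a set \<Rightarrow> bool" where
  "axially_symmetric h X \<longleftrightarrow> (\<forall>y\<in>X. \<forall>z. norm z = norm y \<and> z \<bullet> h = y \<bullet> h \<longrightarrow> z \<in> X)"

definition radially_symmetric :: "'a::real_normed_vector set \<Rightarrow> bool" where
  "radially_symmetric X \<longleftrightarrow> (\<forall>y\<in>X. \<forall>z. norm z = norm y \<longrightarrow> z \<in> X)"

lemma sphere_point_with_heights:
  fixes h1 h2 :: "'a::euclidean_space"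
  assumes "DIM('a) \<ge> 3" and h1: "norm h1 = 1" and h2: "norm h2 = 1" and c: "\<bar>h1 \<bullet> h2\<bar> < 1"
    and d: "\<bar>d\<bar> \<le> r" and t: "\<bar>t\<bar> \<le> sqrt (r\<^sup>2 - d\<^sup>2)"
  obtains q where "norm q = r" "q \<bullet> h2 = d"
    "q \<bullet> h1 = (h1 \<bullet> h2) * d + t * sqrt (1 - (h1 \<bullet> h2)\<^sup>2)"
proof -
  define c where "c = h1 \<bullet> h2"
  define s where "s = sqrt (1 - c\<^sup>2)"
  have "c\<^sup>2 < 1"
    using c by (simp add: c_def abs_square_less_1)
  then have s: "s > 0" "s\<^sup>2 = 1 - c\<^sup>2"
    by (simp_all add: s_def)
  obtain e where e: "norm e = 1" "h1 \<bullet> e = 0" "h2 \<bullet> e = 0"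
    using unit_orthogonal_to_two_exists assms(1) by blast
  have hh: "h1 \<bullet> h1 = 1" "h2 \<bullet> h2 = 1" "e \<bullet> e = 1" "h2 \<bullet> h1 = c" "h1 \<bullet> h2 = c"
    "e \<bullet> h1 = 0" "e \<bullet> h2 = 0"
    using h1 h2 e by (simp_all add: c_def inner_commute flip: power2_norm_eq_inner)
  define u where "u = (1 / s) *\<^sub>R (h1 - c *\<^sub>R h2)"
  have u: "u \<bullet> h1 = s" "u \<bullet> h2 = 0" "u \<bullet> e = 0" "u \<bullet> u = 1"
    using hh s by (auto simp: u_def inner_diff_left inner_diff_right inner_commute field_simps power2_eq_square)
  have "t\<^sup>2 \<le> r\<^sup>2 - d\<^sup>2"
    using sqrt_ge_absD[OF t] .
  define q where "q = d *\<^sub>R h2 + t *\<^sub>R u + sqrt (r\<^sup>2 - d\<^sup>2 - t\<^sup>2) *\<^sub>R e"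
  have "q \<bullet> q = r\<^sup>2"
    using hh u \<open>t\<^sup>2 \<le> r\<^sup>2 - d\<^sup>2\<close>
    by (simp add: q_def inner_add_left inner_add_right inner_commute power2_eq_square)
  then have "norm q = r"
    using d by (simp add: norm_eq_square)
  moreover have "q \<bullet> h2 = d" "q \<bullet> h1 = c * d + t * s"
    using hh u by (simp_all add: q_def inner_add_left)
  ultimately show ?thesis
    using that by (simp add: c_def s_def)
qed

lemma interval_subset_if_locally_absorbing:
  fixes A :: "real set"
  assumes "closed A" and "a0 \<in> A" "\<bar>a0\<bar> < r"
    and nbhd: "\<And>a. a \<in> A \<Longrightarrow> \<bar>a\<bar> < r \<Longrightarrow> \<exists>\<epsilon>>0. ball a \<epsilon> \<subseteq> A"
  shows "{-r..r} \<subseteq> A"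
proof -
  define S where "S = {-r<..<r}"
  have "A \<inter> S = S \<inter> interior A"
    using nbhd interior_subset by (auto simp: S_def mem_interior)
  then have "openin (top_of_set S) (A \<inter> S)"
    using openin_open_Int[OF open_interior, of S A] by simp
  moreover have "closedin (top_of_set S) (A \<inter> S)"
    using closedin_closed_Int[OF \<open>closed A\<close>, of S] by (simp only: Int_commute)
  moreover have "a0 \<in> A \<inter> S"
    using assms(2,3) by (auto simp: S_def)
  ultimately have "A \<inter> S = S"
    using connected_clopen[THEN iffD1, OF connected_Ioo, of "-r" r] unfolding S_def by blast
  then have "closure S \<subseteq> A"
    using closure_minimal \<open>closed A\<close> by blast
  moreover have "r > 0"
    using assms(3) by linarith
  ultimately show ?thesis
    by (simp add: S_def)
qed

lemma abs_less_spread_radius: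
  fixes a c r :: real
  assumes c: "c\<^sup>2 < 1" and a: "\<bar>a\<bar> < r"
  shows "\<bar>a - c\<^sup>2 * a\<bar> < sqrt (1 - c\<^sup>2) * sqrt (r\<^sup>2 - c\<^sup>2 * a\<^sup>2)"
proof -
  have "a\<^sup>2 < r\<^sup>2"
    using a by (intro power2_strict_mono) simp
  then have "(1 - c\<^sup>2) * ((1 - c\<^sup>2) * a\<^sup>2) < (1 - c\<^sup>2) * (r\<^sup>2 - c\<^sup>2 * a\<^sup>2)"
    using c by (intro mult_strict_left_mono) (simp_all add: algebra_simps)
  then have "\<bar>a - c\<^sup>2 * a\<bar>\<^sup>2 < (1 - c\<^sup>2) * (r\<^sup>2 - c\<^sup>2 * a\<^sup>2)"
    by (simp add: power2_eq_square algebra_simps)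
  then show ?thesis
    unfolding real_sqrt_mult[symmetric] by (rule real_less_rsqrt)
qed

lemma interval_subset_if_closed_under_spreading:
  fixes A :: "real set"
  assumes "closed A" and A: "A \<subseteq> {-r..r}" and "a0 \<in> A" and c: "c\<^sup>2 < 1"
    and spread: "\<And>a b. a \<in> A \<Longrightarrow> \<bar>b - c\<^sup>2 * a\<bar> \<le> sqrt (1 - c\<^sup>2) * sqrt (r\<^sup>2 - c\<^sup>2 * a\<^sup>2) \<Longrightarrow> b \<in> A"
  shows "{-r..r} \<subseteq> A"
proof (cases "r = 0")
  case True
  then show ?thesis
    using A \<open>a0 \<in> A\<close> by auto
next
  case False
  moreover have a0: "\<bar>a0\<bar> \<le> r"
    using A \<open>a0 \<in> A\<close> by (auto simp: abs_le_iff)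
  ultimately have r: "r > 0"
    by linarith
  have "\<bar>c\<^sup>2 * a0\<bar> \<le> c\<^sup>2 * r"
    using a0 by (simp add: abs_mult mult_left_mono)
  also have "\<dots> < r"
    using c r by simp
  finally have "\<bar>c\<^sup>2 * a0\<bar> < r" .
  moreover have "c\<^sup>2 * a0 \<in> A"
  proof -
    have "a0\<^sup>2 \<le> r\<^sup>2"
      using power2_le_iff_abs_le[of r a0] r a0 by simp
    moreover have "c\<^sup>2 * a0\<^sup>2 \<le> a0\<^sup>2"
      using c by (simp add: mult_left_le_one_le)
    ultimately show ?thesis
      using spread[OF \<open>a0 \<in> A\<close>, of "c\<^sup>2 * a0"] c by simp
  qed
  moreover have "\<exists>\<epsilon>>0. ball a \<epsilon> \<subseteq> A" if "a \<in> A" "\<bar>a\<bar> < r" for a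
  proof -
    define g where "g = sqrt (1 - c\<^sup>2) * sqrt (r\<^sup>2 - c\<^sup>2 * a\<^sup>2)"
    have "\<bar>a - c\<^sup>2 * a\<bar> < g"
      unfolding g_def using c that(2) by (rule abs_less_spread_radius)
    moreover have "b \<in> A" if "dist a b < g - \<bar>a - c\<^sup>2 * a\<bar>" for b
    proof -
      have "\<bar>b - c\<^sup>2 * a\<bar> \<le> g"
        using that by (simp add: dist_real_def abs_minus_commute abs_triangle_ineq4)
      then show ?thesis
        using spread \<open>a \<in> A\<close> unfolding g_def by blast
    qed
    ultimately show ?thesis
      by (intro exI[of _ "g - \<bar>a - c\<^sup>2 * a\<bar>"]) auto
  qed
  ultimately show ?thesis
    using interval_subset_if_locally_absorbing[OF \<open>closed A\<close>] by blast
qed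

lemma axially_symmetric_two_axes_spread:
  fixes X :: "'a::euclidean_space set"
  assumes dim: "DIM('a) \<ge> 3" and h1: "norm h1 = 1" and h2: "norm h2 = 1" and c: "\<bar>h1 \<bullet> h2\<bar> < 1"
    and X1: "axially_symmetric h1 X" and X2: "axially_symmetric h2 X"
    and p: "p \<in> X" "p \<bullet> h1 = a"
    and b: "\<bar>b - (h1 \<bullet> h2)\<^sup>2 * a\<bar> \<le> sqrt (1 - (h1 \<bullet> h2)\<^sup>2) * sqrt ((norm p)\<^sup>2 - (h1 \<bullet> h2)\<^sup>2 * a\<^sup>2)"
  obtains q where "q \<in> X" "norm q = norm p" "q \<bullet> h1 = b"
proof -
  define r where "r = norm p"
  define c where "c = h1 \<bullet> h2"
  have "c\<^sup>2 < 1"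
    using c by (simp add: c_def abs_square_less_1)
  have ar: "\<bar>a\<bar> \<le> r"
    using Cauchy_Schwarz_ineq2[of p h1] h1 p(2) by (simp add: r_def)
  then have "a\<^sup>2 \<le> r\<^sup>2"
    using power2_le_iff_abs_le[of r a] by (simp add: r_def)
  then obtain p' where p': "norm p' = r" "p' \<bullet> h1 = a" "p' \<bullet> h2 = c * a"
    using sphere_point_with_heights[OF dim h2 h1 _ ar, of 0] c by (auto simp: c_def inner_commute)
  then have "p' \<in> X"
    using X1 p by (auto simp: axially_symmetric_def r_def)
  have "\<bar>c * a\<bar> \<le> \<bar>a\<bar>"
    using c by (simp add: abs_mult c_def mult_left_le_one_le)
  then have "\<bar>c * a\<bar> \<le> r"
    using ar by linarith
  moreover have "\<bar>(b - c\<^sup>2 * a) / sqrt (1 - c\<^sup>2)\<bar> \<le> sqrt (r\<^sup>2 - (c * a)\<^sup>2)"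
    using b \<open>c\<^sup>2 < 1\<close>
    by (simp add: c_def r_def abs_div pos_divide_le_eq power_mult_distrib mult.commute)
  ultimately obtain q where q: "norm q = r" "q \<bullet> h2 = c * a"
      "q \<bullet> h1 = c * (c * a) + (b - c\<^sup>2 * a) / sqrt (1 - c\<^sup>2) * sqrt (1 - c\<^sup>2)"
    using sphere_point_with_heights[OF dim h1 h2 c] unfolding c_def by blast
  have "q \<in> X"
    using X2 \<open>p' \<in> X\<close> p' q by (auto simp: axially_symmetric_def)
  moreover have "q \<bullet> h1 = b"
    using q(3) \<open>c\<^sup>2 < 1\<close> by (simp add: power2_eq_square)
  ultimately show ?thesis
    using that q(1) by (simp add: r_def)
qed

theorem radially_symmetric_if_axially_symmetric_two_axes:
  fixes X :: "'a::euclidean_space set"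
  assumes dim: "DIM('a) \<ge> 3" and h1: "norm h1 = 1" and h2: "norm h2 = 1"
    and c: "\<bar>h1 \<bullet> h2\<bar> < 1" and "closed X"
    and X1: "axially_symmetric h1 X" and X2: "axially_symmetric h2 X"
  shows "radially_symmetric X"
  unfolding radially_symmetric_def
proof (intro ballI allI impI)
  fix y z :: 'a assume "y \<in> X" and z: "norm z = norm y"
  define r where "r = norm y"
  define A where "A = (\<lambda>w. w \<bullet> h1) ` (X \<inter> sphere 0 r)"
  have height_le: "\<bar>w \<bullet> h1\<bar> \<le> norm w" for w
    using Cauchy_Schwarz_ineq2[of w h1] h1 by simp
  have "{-r..r} \<subseteq> A"
  proof (rule interval_subset_if_closed_under_spreading)
    have "compact (X \<inter> sphere 0 r)"
      using \<open>closed X\<close> by (simp add: closed_Int_compact)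
    then show "closed A"
      unfolding A_def by (intro compact_imp_closed compact_continuous_image continuous_intros)
    have "\<bar>b\<bar> \<le> r" if "b \<in> A" for b
      using that height_le by (auto simp: A_def)
    then show "A \<subseteq> {-r..r}"
      by (fastforce simp: abs_le_iff)
    show "y \<bullet> h1 \<in> A"
      using \<open>y \<in> X\<close> by (auto simp: A_def r_def)
    show "(h1 \<bullet> h2)\<^sup>2 < 1"
      using c by (simp add: abs_square_less_1)
    fix a b
    assume "a \<in> A" and b: "\<bar>b - (h1 \<bullet> h2)\<^sup>2 * a\<bar>
      \<le> sqrt (1 - (h1 \<bullet> h2)\<^sup>2) * sqrt (r\<^sup>2 - (h1 \<bullet> h2)\<^sup>2 * a\<^sup>2)"
    then obtain p where "p \<in> X" "norm p = r" "p \<bullet> h1 = a"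
      by (auto simp: A_def)
    then obtain q where "q \<in> X" "norm q = r" "q \<bullet> h1 = b"
      using axially_symmetric_two_axes_spread[OF dim h1 h2 c X1 X2, of p a b] b by auto
    then show "b \<in> A"
      by (auto simp: A_def)
  qed
  moreover have "\<bar>z \<bullet> h1\<bar> \<le> r"
    using height_le[of z] z by (simp add: r_def)
  ultimately have "z \<bullet> h1 \<in> A"
    by (auto simp: abs_le_iff)
  then obtain w where "w \<in> X" "norm w = norm z" "w \<bullet> h1 = z \<bullet> h1"
    using z by (auto simp: A_def r_def)
  then show "z \<in> X"
    using X1 by (auto simp: axially_symmetric_def)
qed

section \<open>Two lines\<close>

lemma subspace_dim_1_eq_span_unit:
  fixes H :: "'a::euclidean_space set"
  assumes "subspace H" "dim H = 1"
  obtains h where "norm h = 1" "H = span {h}"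
proof -
  obtain B where B: "B \<subseteq> H" "independent B" "H \<subseteq> span B" "card B = 1"
    using basis_exists assms(2) by metis
  then obtain b where "B = {b}"
    using card_1_singletonE by blast
  then have "b \<noteq> 0" "H = span {b}"
    using B span_subspace[OF B(1) B(3) assms(1)] dependent_zero by auto
  moreover have "span {sgn b} = span {b}"
    using span_image_scale[of "{b}" "\<lambda>_. inverse (norm b)"] \<open>b \<noteq> 0\<close> by (simp add: sgn_div_norm)
  ultimately show ?thesis
    using that[of "sgn b"] by (simp add: norm_sgn)
qed

lemma orthogonal_comp_span_singleton: "orthogonal_comp (span {h}) = {x. h \<bullet> x = 0}"
  by (auto simp: orthogonal_comp_def orthogonal_def span_singleton)

lemma abs_inner_less_1_if_span_neq:
  fixes h1 h2 :: "'a::euclidean_space"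
  assumes "norm h1 = 1" "norm h2 = 1" "span {h1} \<noteq> span {h2}"
  shows "\<bar>h1 \<bullet> h2\<bar> < 1"
proof -
  have "\<bar>h1 \<bullet> h2\<bar> \<noteq> 1"
  proof
    assume "\<bar>h1 \<bullet> h2\<bar> = 1"
    then have "h2 = h1 \<or> h2 = - h1"
      using norm_cauchy_schwarz_abs_eq[of h1 h2] assms(1,2) by simp
    moreover have "h1 \<in> span {h1}" "- h1 \<in> span {h1}" "h2 \<in> span {h2}" "- h2 \<in> span {h2}"
      by (simp_all add: span_base span_neg)
    ultimately have "h2 \<in> span {h1}" "h1 \<in> span {h2}"
      by auto
    then show False
      using assms(3) by (simp add: span_eq)
  qed
  then show ?thesis
    using Cauchy_Schwarz_ineq2[of h1 h2] assms(1,2) by simp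
qed

lemma axially_symmetric_if_sphere_slices_closed:
  assumes "E \<subseteq> sphere 0 1" "\<forall>x\<in>E. sphere 0 1 \<inter> (+) x ` orthogonal_comp (span {h}) \<subseteq> E"
  shows "axially_symmetric h E"
  unfolding axially_symmetric_def
proof (intro ballI allI impI)
  fix y z assume "y \<in> E" and yz: "norm z = norm y \<and> z \<bullet> h = y \<bullet> h"
  then have "z \<in> sphere 0 1"
    using assms(1) by auto
  moreover have "z \<in> (+) y ` orthogonal_comp (span {h})"
    using yz by (intro image_eqI[of _ _ "z - y"]) (auto simp: orthogonal_comp_span_singleton inner_diff_right inner_commute)
  ultimately show "z \<in> E"
    using assms(2) \<open>y \<in> E\<close> by blast
qed

lemma axially_symmetric_if_rotation_invariant:
  fixes h :: "real^'n"
  assumes "CARD('n) \<ge> 3" and inv: "\<forall>Q. rotation_fixing (span {h}) Q \<longrightarrow> (\<lambda>x. Q *v x) ` X \<subseteq> X"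
  shows "axially_symmetric h X"
  unfolding axially_symmetric_def
proof (intro ballI allI impI)
  fix y z assume "y \<in> X" and "norm z = norm y \<and> z \<bullet> h = y \<bullet> h"
  then obtain Q where Q: "rotation_matrix Q" "Q *v h = h" "Q *v y = z"
    using rotation_fixing_vector_exists[OF assms(1)] by metis
  then have "rotation_fixing (span {h}) Q"
    by (auto simp: rotation_fixing_def span_singleton matrix_vector_mult_scaleR)
  then show "z \<in> X"
    using inv \<open>y \<in> X\<close> Q(3) by blast
qed

lemma axially_symmetric_if_rot_symmetric:
  fixes h :: "real^'n"
  assumes h: "norm h = 1" and sym: "rot_symmetric X (span {h})"
  shows "axially_symmetric h X"
  unfolding axially_symmetric_def
proof (intro ballI allI impI)
  fix y z assume "y \<in> X" and yz: "norm z = norm y \<and> z \<bullet> h = y \<bullet> h"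
  define x where "x = (y \<bullet> h) *\<^sub>R h"
  have "x \<in> span {h}"
    by (simp add: x_def span_base span_mul)
  with sym obtain R where R: "X \<inter> (+) x ` {v. h \<bullet> v = 0} = (\<Union>r\<in>R. sphere x r \<inter> (+) x ` {v. h \<bullet> v = 0})"
    unfolding rot_symmetric_def orthogonal_comp_span_singleton by blast
  have "h \<bullet> h = 1"
    using h by (simp flip: power2_norm_eq_inner)
  then have "h \<bullet> (y - x) = 0" "h \<bullet> (z - x) = 0"
    using yz by (simp_all add: x_def inner_diff_right inner_commute)
  moreover have slice: "w \<in> (+) x ` {v. h \<bullet> v = 0}" if "h \<bullet> (w - x) = 0" for w
    using that by (intro image_eqI[of _ _ "w - x"]) auto
  ultimately have slices: "y \<in> (+) x ` {v. h \<bullet> v = 0}" "z \<in> (+) x ` {v. h \<bullet> v = 0}"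
    by blast+
  have sq: "(norm (w - (w \<bullet> h) *\<^sub>R h))\<^sup>2 = (norm w)\<^sup>2 - (w \<bullet> h)\<^sup>2" for w
    unfolding power2_norm_eq_inner using \<open>h \<bullet> h = 1\<close>
    by (simp add: inner_diff_left inner_diff_right inner_commute power2_eq_square)
  then have "(norm (z - x))\<^sup>2 = (norm (y - x))\<^sup>2"
    using sq[of y] sq[of z] yz by (simp add: x_def)
  then have "dist x z = dist x y"
    by (simp add: dist_norm norm_minus_commute)
  have "y \<in> X \<inter> (+) x ` {v. h \<bullet> v = 0}"
    using \<open>y \<in> X\<close> slices(1) by blast
  then obtain r where "r \<in> R" "dist x y = r"
    unfolding R by auto
  then have "z \<in> sphere x r \<inter> (+) x ` {v. h \<bullet> v = 0}"
    using \<open>dist x z = dist x y\<close> slices(2) by simp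
  then have "z \<in> X \<inter> (+) x ` {v. h \<bullet> v = 0}"
    unfolding R using \<open>r \<in> R\<close> by blast
  then show "z \<in> X"
    by blast
qed

lemma union_of_spheres_at_0_if_radially_symmetric:
  "radially_symmetric F \<Longrightarrow> union_of_spheres_at 0 F"
  unfolding union_of_spheres_at_def radially_symmetric_def
  by (rule exI[of _ "norm ` F"]) auto

lemma sphere_eq_if_radially_symmetric:
  assumes "radially_symmetric E" "E \<subseteq> sphere 0 r" "E \<noteq> {}"
  shows "E = sphere 0 r"
proof
  obtain y where "y \<in> E"
    using assms(3) by blast
  then have "z \<in> E" if "norm z = norm y" for z
    using assms(1) that unfolding radially_symmetric_def by blast
  moreover have "norm y = r"
    using assms(2) \<open>y \<in> E\<close> by auto
  ultimately show "sphere 0 r \<subseteq> E"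
    by auto
qed (use assms(2) in blast)

lemma ball_at_origin_if_radially_symmetric:
  fixes K :: "(real^'n) set"
  assumes K: "convex_body K" and "radially_symmetric K"
  shows "ball_at_origin K"
proof -
  have sym: "z \<in> K" if "y \<in> K" "norm z = norm y" for y z
    using \<open>radially_symmetric K\<close> that unfolding radially_symmetric_def by blast
  have "compact K" "convex K" "interior K \<noteq> {}"
    using K by (auto simp: convex_body_def)
  moreover have "K \<noteq> {}"
    using \<open>interior K \<noteq> {}\<close> interior_subset by blast
  moreover have "compact (norm ` K)"
    using \<open>compact K\<close> by (intro compact_continuous_image continuous_intros)
  ultimately obtain p where p: "p \<in> K" and p_max: "\<And>x. x \<in> K \<Longrightarrow> norm x \<le> norm p"
    using compact_attains_sup[of "norm ` K"] by auto
  have "0 \<in> K"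
    using convexD[OF \<open>convex K\<close> p, of "- p" "1/2" "1/2"] sym[OF p, of "- p"] by simp
  have "norm p > 0"
  proof (rule ccontr)
    assume "\<not> norm p > 0"
    then have "norm x \<le> 0" if "x \<in> K" for x
      using p_max[OF that] by linarith
    then have "K \<subseteq> {0}"
      by auto
    then show False
      using \<open>interior K \<noteq> {}\<close> interior_mono[of K "{0}"] by simp
  qed
  have "cball 0 (norm p) \<subseteq> K"
  proof
    fix x :: "real^'n" assume "x \<in> cball 0 (norm p)"
    then have "norm x / norm p \<le> 1"
      using \<open>norm p > 0\<close> by simp
    then have "(norm x / norm p) *\<^sub>R p \<in> K"
      using convexD_alt[OF \<open>convex K\<close> \<open>0 \<in> K\<close> p, of "norm x / norm p"] by simp
    moreover have "norm x = norm ((norm x / norm p) *\<^sub>R p)"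
      using \<open>norm p > 0\<close> by simp
    ultimately show "x \<in> K"
      by (rule sym)
  qed
  moreover have "K \<subseteq> cball 0 (norm p)"
    using p_max by auto
  ultimately have "K = cball 0 (norm p)"
    by blast
  then show ?thesis
    using \<open>norm p > 0\<close> unfolding ball_at_origin_def by blast
qed

lemma setsum_hyperplanes_eq_UNIV:
  fixes h1 h2 :: "real^'n"
  assumes "norm h1 = 1" "norm h2 = 1" "\<bar>h1 \<bullet> h2\<bar> < 1"
  shows "setsum {x. h1 \<bullet> x = 0} {x. h2 \<bullet> x = 0} = UNIV"
proof -
  define c where "c = h1 \<bullet> h2"
  have "c\<^sup>2 < 1"
    using assms(3) by (simp add: c_def abs_square_less_1)
  have hh: "h1 \<bullet> h1 = 1" "h2 \<bullet> h2 = 1" "h1 \<bullet> h2 = c" "h2 \<bullet> h1 = c"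
    using assms by (simp_all add: c_def inner_commute flip: power2_norm_eq_inner)
  have "x \<in> setsum {x. h1 \<bullet> x = 0} {x. h2 \<bullet> x = 0}" for x
  proof -
    define b where "b = ((h1 \<bullet> x) / (1 - c\<^sup>2)) *\<^sub>R (h1 - c *\<^sub>R h2)"
    have "h1 \<bullet> b = h1 \<bullet> x" "h2 \<bullet> b = 0"
      using hh \<open>c\<^sup>2 < 1\<close> by (simp_all add: b_def inner_diff_right power2_eq_square)
    then show ?thesis
      unfolding setsum_def by (intro CollectI exI[of _ "x - b"] exI[of _ b]) (simp add: inner_diff_right)
  qed
  then show ?thesis
    by auto
qed

lemma not_orth_decomposable_if_common_nonzero:
  fixes e :: "real^'n"
  assumes "e \<noteq> 0" "\<And>U. U \<in> F \<Longrightarrow> e \<in> U"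
  shows "\<not> orth_decomposable F"
  using assms unfolding orth_decomposable_def orthogonal_def
  by (metis Un_iff all_not_in_conv inner_eq_zero_iff)

lemma two_axes_rigidity:
  fixes h1 h2 :: "real^'n"
  assumes n3: "CARD('n) \<ge> 3" and h1: "norm h1 = 1" and h2: "norm h2 = 1" and c: "\<bar>h1 \<bullet> h2\<bar> < 1"
  defines "H1 \<equiv> span {h1}" and "H2 \<equiv> span {h2}"
  shows "setsum (orthogonal_comp H1) (orthogonal_comp H2) = UNIV"
    and "\<not> orth_decomposable {orthogonal_comp H1, orthogonal_comp H2}"
    and "\<lbrakk>E \<subseteq> sphere 0 1; E \<noteq> {}; closed E;
          \<forall>H\<in>{H1, H2}. \<forall>x\<in>E. sphere 0 1 \<inter> ((+) x ` orthogonal_comp H) \<subseteq> E\<rbrakk>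
          \<Longrightarrow> E = sphere 0 1"
    and "\<lbrakk>closed F; \<forall>Q. rotation_fixing H1 Q \<longrightarrow> (\<lambda>x. Q *v x) ` F \<subseteq> F;
          \<forall>Q. rotation_fixing H2 Q \<longrightarrow> (\<lambda>x. Q *v x) ` F \<subseteq> F\<rbrakk>
          \<Longrightarrow> union_of_spheres_at 0 F"
    and "\<lbrakk>convex_body K; rot_symmetric K H1; rot_symmetric K H2\<rbrakk> \<Longrightarrow> ball_at_origin K"
proof -
  have dim: "DIM(real^'n) \<ge> 3"
    using n3 by simp
  note radial = radially_symmetric_if_axially_symmetric_two_axes[OF dim h1 h2 c]
  show "setsum (orthogonal_comp H1) (orthogonal_comp H2) = UNIV"
    using setsum_hyperplanes_eq_UNIV[OF h1 h2 c] by (simp add: H1_def H2_def orthogonal_comp_span_singleton)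
  obtain e :: "real^'n" where "norm e = 1" "h1 \<bullet> e = 0" "h2 \<bullet> e = 0"
    using unit_orthogonal_to_two_exists[OF dim] by blast
  then show "\<not> orth_decomposable {orthogonal_comp H1, orthogonal_comp H2}"
    by (intro not_orth_decomposable_if_common_nonzero[of e])
      (auto simp: H1_def H2_def orthogonal_comp_span_singleton)
  show "E = sphere 0 1"
    if E: "E \<subseteq> sphere 0 1" "E \<noteq> {}" "closed E"
      "\<forall>H\<in>{H1, H2}. \<forall>x\<in>E. sphere 0 1 \<inter> ((+) x ` orthogonal_comp H) \<subseteq> E"
  proof -
    have "axially_symmetric h1 E" "axially_symmetric h2 E"
      using E by (intro axially_symmetric_if_sphere_slices_closed; simp add: H1_def H2_def)+
    then show ?thesis
      using E radial sphere_eq_if_radially_symmetric by blast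
  qed
  show "union_of_spheres_at 0 F"
    if "closed F" "\<forall>Q. rotation_fixing H1 Q \<longrightarrow> (\<lambda>x. Q *v x) ` F \<subseteq> F"
      "\<forall>Q. rotation_fixing H2 Q \<longrightarrow> (\<lambda>x. Q *v x) ` F \<subseteq> F"
    using that unfolding H1_def H2_def
    by (intro union_of_spheres_at_0_if_radially_symmetric radial axially_symmetric_if_rotation_invariant[OF n3])
  show "ball_at_origin K"
    if "convex_body K" "rot_symmetric K H1" "rot_symmetric K H2"
  proof -
    have "closed K"
      using that(1) by (simp add: convex_body_def compact_imp_closed)
    with that show ?thesis
      unfolding H1_def H2_def
      by (intro ball_at_origin_if_radially_symmetric radial axially_symmetric_if_rot_symmetric h1 h2)
  qed
qed

section \<open>Cylinders\<close>

lemma rot_symmetricI: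
  fixes X H :: "(real^'n) set"
  assumes "\<And>x u w. x \<in> H \<Longrightarrow> u \<in> orthogonal_comp H \<Longrightarrow> w \<in> orthogonal_comp H \<Longrightarrow>
            norm u = norm w \<Longrightarrow> x + u \<in> X \<Longrightarrow> x + w \<in> X"
  shows "rot_symmetric X H"
  unfolding rot_symmetric_def
proof
  fix x assume x: "x \<in> H"
  define R where "R = {norm u | u. u \<in> orthogonal_comp H \<and> x + u \<in> X}"
  have "X \<inter> (+) x ` orthogonal_comp H = (\<Union>r\<in>R. sphere x r \<inter> (+) x ` orthogonal_comp H)"
  proof safe
    fix u assume "x + u \<in> X" "u \<in> orthogonal_comp H"
    then show "x + u \<in> (\<Union>r\<in>R. sphere x r \<inter> (+) x ` orthogonal_comp H)"
      by (auto simp: R_def dist_norm)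
  next
    fix r w assume "r \<in> R" "x + w \<in> sphere x r" and w: "w \<in> orthogonal_comp H"
    then obtain u where u: "u \<in> orthogonal_comp H" "norm u = norm w" "x + u \<in> X"
      by (auto simp: R_def dist_norm)
    then show "x + w \<in> X"
      using assms[OF x u(1) w u(2)] by blast
  qed auto
  moreover have "R \<subseteq> {0..}"
    by (auto simp: R_def)
  ultimately show "\<exists>R\<subseteq>{0..}. X \<inter> (+) x ` orthogonal_comp H = (\<Union>r\<in>R. sphere x r \<inter> (+) x ` orthogonal_comp H)"
    by blast
qed

definition cylinder :: "'n \<Rightarrow> (real^'n) set" where
  "cylinder a = {x. norm (x - (x $ a) *\<^sub>R axis a 1) \<le> 1 \<and> \<bar>x $ a\<bar> \<le> 1}"

lemma rot_symmetric_cylinder: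
  fixes H :: "(real^'n) set"
  assumes H: "subspace H" "axis a 1 \<in> H"
  shows "rot_symmetric (cylinder a) H"
proof (rule rot_symmetricI)
  fix x u w assume x: "x \<in> H" and u: "u \<in> orthogonal_comp H" and w: "w \<in> orthogonal_comp H"
    and uw: "norm u = norm w" and "x + u \<in> cylinder a"
  define d where "d = x - (x $ a) *\<^sub>R axis a 1"
  have "d \<in> H"
    unfolding d_def using H x by (simp add: subspace_diff subspace_scale)
  have split: "(x + v) $ a = x $ a \<and>
      (norm (x + v - ((x + v) $ a) *\<^sub>R axis a 1))\<^sup>2 = (norm d)\<^sup>2 + (norm v)\<^sup>2"
    if "v \<in> orthogonal_comp H" for v
  proof -
    have "axis a 1 \<bullet> v = 0" "d \<bullet> v = 0"
      using that H(2) \<open>d \<in> H\<close> by (auto simp: orthogonal_comp_def orthogonal_def)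
    then have "v $ a = 0"
      using inner_axis[of v a 1] by (simp add: inner_commute)
    moreover have "(norm (d + v))\<^sup>2 = (norm d)\<^sup>2 + (norm v)\<^sup>2"
      using \<open>d \<bullet> v = 0\<close> by (simp add: power2_norm_eq_inner inner_add_left inner_add_right inner_commute)
    ultimately show ?thesis
      by (simp add: d_def algebra_simps)
  qed
  have "norm (x + w - ((x + w) $ a) *\<^sub>R axis a 1) = norm (x + u - ((x + u) $ a) *\<^sub>R axis a 1)"
    using split[OF u] split[OF w] uw by (metis norm_ge_zero power2_eq_imp_eq)
  moreover have "(x + w) $ a = (x + u) $ a"
    using split[OF u] split[OF w] by simp
  ultimately show "x + w \<in> cylinder a"
    using \<open>x + u \<in> cylinder a\<close> by (simp add: cylinder_def)
qed

lemma convex_body_cylinder: "convex_body (cylinder (a :: 'n::finite))"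
proof -
  define L where "L x = x - (x $ a) *\<^sub>R axis a 1" for x :: "real^'n"
  have "linear L"
    by (rule linearI) (auto simp: L_def algebra_simps)
  moreover have "linear (\<lambda>x :: real^'n. x $ a)"
    by (rule linearI) auto
  moreover have eq: "cylinder a = L -` cball 0 1 \<inter> (\<lambda>x. x $ a) -` {-1..1}"
    by (auto simp: cylinder_def L_def abs_le_iff)
  ultimately have "convex (cylinder a)" "closed (cylinder a)"
    by (simp_all add: convex_Int convex_linear_vimage closed_Int continuous_closed_vimage
        linear_continuous_at linear_conv_bounded_linear)
  moreover have "cylinder a \<subseteq> cball 0 2"
  proof
    fix x assume "x \<in> cylinder a"
    then have "norm (L x) \<le> 1" "\<bar>x $ a\<bar> \<le> 1"
      by (auto simp: cylinder_def L_def)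
    moreover have "norm x \<le> norm (L x) + norm ((x $ a) *\<^sub>R axis a (1::real))"
      using norm_triangle_ineq[of "L x" "(x $ a) *\<^sub>R axis a 1"] by (simp add: L_def)
    ultimately show "x \<in> cball 0 2"
      by simp
  qed
  moreover have "ball 0 (1/2) \<subseteq> cylinder a"
  proof
    fix x :: "real^'n" assume "x \<in> ball 0 (1/2)"
    moreover have "\<bar>x $ a\<bar> \<le> norm x"
      by (rule component_le_norm_cart)
    moreover have "norm (x - (x $ a) *\<^sub>R axis a 1) \<le> norm x + norm ((x $ a) *\<^sub>R axis a (1::real))"
      by (rule norm_triangle_ineq4)
    ultimately show "x \<in> cylinder a"
      by (simp add: cylinder_def)
  qed
  then have "interior (cylinder a) \<noteq> {}"
    using interior_mono[of "ball 0 (1/2)" "cylinder a"] by auto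
  ultimately show ?thesis
    by (simp add: convex_body_def compact_eq_bounded_closed bounded_subset[OF bounded_cball])
qed

lemma not_ball_at_origin_cylinder:
  fixes a b :: "'n::finite"
  assumes "a \<noteq> b"
  shows "\<not> ball_at_origin (cylinder a)"
proof
  assume "ball_at_origin (cylinder a)"
  then obtain r where "r > 0" and r: "cylinder a = cball 0 r"
    by (auto simp: ball_at_origin_def)
  have "r *\<^sub>R axis a (1::real) \<in> cylinder a"
    using r \<open>r > 0\<close> by simp
  then have "r \<le> 1"
    by (simp add: cylinder_def)
  define v :: "real^'n" where "v = axis a 1 + axis b 1"
  have "v $ a = 1" "axis b (1::real) $ a = 0"
    using assms by (simp_all add: v_def axis_def)
  then have "v \<in> cylinder a"
    by (simp add: cylinder_def v_def)
  moreover have "norm v = sqrt 2"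
    using assms by (simp add: v_def norm_eq_sqrt_inner inner_add_left inner_add_right inner_axis_axis)
  ultimately have "sqrt 2 \<le> r"
    using r by simp
  moreover have "1 < sqrt (2::real)"
    by simp
  ultimately show False
    using \<open>r \<le> 1\<close> by linarith
qed

lemma planes_through_axis_exist:
  assumes "CARD('n) \<ge> 3"
  obtains a b :: "'n::finite" and H :: "nat \<Rightarrow> (real^'n) set"
  where "a \<noteq> b" "inj H" "\<And>j. subspace (H j)" "\<And>j. dim (H j) = 2" "\<And>j. axis a 1 \<in> H j"
proof -
  obtain S :: "'n set" where "card S = 3"
    using obtain_subset_with_card_n[of 3 "UNIV :: 'n set"] assms by auto
  then obtain a b c :: 'n where abc: "a \<noteq> b" "b \<noteq> c" "a \<noteq> c"
    unfolding card_3_iff by blast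
  define v :: "nat \<Rightarrow> real^'n" where "v j = axis b 1 + real j *\<^sub>R axis c 1" for j
  define H where "H j = span {axis a 1, v j}" for j
  have coords: "v j $ a = 0" "v j $ b = 1" "v j $ c = real j" for j
    using abc by (simp_all add: v_def axis_def)
  have slope: "x $ c = real j * x $ b" if "x \<in> H j" for x j
  proof -
    have "subspace {x :: real^'n. x $ c = real j * x $ b}"
      by (auto simp: subspace_def algebra_simps)
    moreover have "{axis a 1, v j} \<subseteq> {x. x $ c = real j * x $ b}"
      using abc coords by (auto simp: axis_def)
    ultimately show ?thesis
      using that span_minimal unfolding H_def by blast
  qed
  have "inj H"
  proof (rule injI)
    fix i j assume "H i = H j"
    then have "v i \<in> H j"
      by (metis H_def insertCI span_base)
    then show "i = j"
      using slope[of "v i" j] coords by simp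
  qed
  moreover have "dim (H j) = 2" for j
  proof -
    have orth: "axis a 1 \<bullet> v j = 0"
      using coords(1)[of j] by (simp add: inner_axis')
    have ne: "axis a 1 \<noteq> v j" "v j \<noteq> 0"
      using coords(1,2)[of j] by (metis axis_nth zero_neq_one, metis zero_index zero_neq_one)
    then have "independent {axis a 1, v j}"
      using orth by (intro pairwise_orthogonal_independent) (auto simp: pairwise_def orthogonal_def inner_commute)
    then show ?thesis
      using ne(1) by (simp add: H_def dim_span dim_eq_card_independent)
  qed
  ultimately show ?thesis
    using that[of a b H] abc(1) by (simp add: H_def span_base)
qed

theorem corollary4p3:
  shows
  "(CARD('n) \<ge> 3 \<longrightarrow>
     (\<forall>H1 H2 :: (real^'n) set.
        subspace H1 \<and> dim H1 = 1 \<and> subspace H2 \<and> dim H2 = 1 \<and> H1 \<noteq> H2 \<longrightarrow>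
          setsum (orthogonal_comp H1) (orthogonal_comp H2) = UNIV
        \<and> \<not> orth_decomposable {orthogonal_comp H1, orthogonal_comp H2}
        \<and> (\<forall>E. E \<subseteq> sphere 0 1 \<and> E \<noteq> {} \<and> closed E \<and>
              (\<forall>H\<in>{H1, H2}. \<forall>x\<in>E. sphere 0 1 \<inter> ((+) x ` orthogonal_comp H) \<subseteq> E)
              \<longrightarrow> E = sphere 0 1)
        \<and> (\<forall>F. closed F \<and> (\<forall>Q. rotation_fixing H1 Q \<longrightarrow> (\<lambda>x. Q *v x) ` F \<subseteq> F)
                 \<and> (\<forall>Q. rotation_fixing H2 Q \<longrightarrow> (\<lambda>x. Q *v x) ` F \<subseteq> F)
              \<longrightarrow> union_of_spheres_at 0 F)
        \<and> (\<forall>K. convex_body K \<and> rot_symmetric K H1 \<and> rot_symmetric K H2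
              \<longrightarrow> ball_at_origin K)))
   \<and>
   (CARD('n) \<ge> 4 \<longrightarrow>
     (\<forall>k::nat. \<exists>(H :: nat \<Rightarrow> (real^'n) set) K.
        inj_on H {1..k} \<and>
        (\<forall>j\<in>{1..k}. subspace (H j) \<and> 2 \<le> dim (H j) \<and> dim (H j) \<le> CARD('n) - 2) \<and>
        convex_body K \<and> (\<forall>j\<in>{1..k}. rot_symmetric K (H j)) \<and> \<not> ball_at_origin K))"
proof ((rule conjI; intro impI allI), goal_cases)
  case (1 H1 H2)
  then obtain h1 h2 where h1: "norm h1 = 1" "H1 = span {h1}" and h2: "norm h2 = 1" "H2 = span {h2}"
    using subspace_dim_1_eq_span_unit by metis
  moreover have "\<bar>h1 \<bullet> h2\<bar> < 1"
    using abs_inner_less_1_if_span_neq h1 h2 1 by blast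
  ultimately show ?case
    using two_axes_rigidity[OF \<open>CARD('n) \<ge> 3\<close>, of h1 h2] by simp
next
  case (2 k)
  then have "CARD('n) \<ge> 3"
    by simp
  then obtain a b :: 'n and H :: "nat \<Rightarrow> (real^'n) set"
    where "a \<noteq> b" "inj H" and planes: "\<And>j. subspace (H j)" "\<And>j. dim (H j) = 2" "\<And>j. axis a 1 \<in> H j"
    using planes_through_axis_exist by blast
  have "inj_on H {1..k}"
    using \<open>inj H\<close> by (rule inj_on_subset) simp
  moreover have "rot_symmetric (cylinder a) (H j)" for j
    using planes by (intro rot_symmetric_cylinder)
  ultimately show ?case
    using 2 planes convex_body_cylinder[of a] not_ball_at_origin_cylinder[OF \<open>a \<noteq> b\<close>]
    by (intro exI[of _ H] exI[of _ "cylinder a"]) auto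
qed

end
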